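(* Let $T>0$ and let $f:\Omega\times[0,T]\times\mathbb{R}\times\mathbb{R}^d\to\mathbb{R}$ satisfy $f(\cdot,y,z)\in L^2_{\mathcal{F}}(0,T)$ for each $(y,z)$ and $|f(t,y,z)-f(t,y',z')|\le\mu(|y-y'|+|z-z'|)$. For $(t,y,z)\in[0,T]\times\mathbb{R}\times\mathbb{R}^d$ let $(Y^{t,y,z}_s)_{s\in[t,T]}$ be the solution of $Y^{t,y,z}_s=y-\int_t^sf(r,Y^{t,y,z}_r,z)dr+z(B_s-B_t)$. For $n\ge1$ let $t^n_i=i2^{-n}T$, $i=0,\dots,2^n$, and $$f^n(s,y,z):=\sum_{i=0}^{2^n-1}f(s,Y^{t^n_i,y,z}_s,z)1_{[t^n_i,t^n_{i+1})}(s),\quad s\in[0,T].$$ Then for each fixed $(y,z)$, $\lim_{n\to\infty}E\int_0^T|f^n(s,y,z)-f(s,y,z)|^2ds=0$.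
   Context: $(\Omega,\mathcal{F},P)$ carries a $d$-dimensional Brownian motion $B$ with filtration $\mathcal{F}_t=\sigma\{B_s:s\le t\}$; $L^2_{\mathcal{F}}(0,T)$ denotes real predictable processes $\phi$ with $E\int_0^T|\phi_s|^2ds<\infty$. *)

theory Defs
  imports "HOL-Probability.Probability"
begin

definition brownian_motion :: "'a measure \<Rightarrow> (real \<Rightarrow> 'a \<Rightarrow> real^'d) \<Rightarrow> bool" where
  "brownian_motion M B \<longleftrightarrow>
     prob_space M \<and>
     (\<forall>t. B t \<in> borel_measurable M) \<and>
     (\<forall>\<omega>\<in>space M. B 0 \<omega> = 0 \<and> continuous_on {0..} (\<lambda>t. B t \<omega>)) \<and>
     (\<forall>s u k. 0 \<le> s \<and> s < u \<longrightarrow>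
        distributed M lborel (\<lambda>\<omega>. (B u \<omega> - B s \<omega>) $ k)
          (\<lambda>x. ennreal (normal_density 0 (sqrt (u - s)) x))) \<and>
     (\<forall>(ts :: nat \<Rightarrow> real) n. 0 \<le> ts 0 \<and> (\<forall>i<n. ts i < ts (Suc i)) \<longrightarrow>
        prob_space.indep_vars M (\<lambda>_. borel)
          (\<lambda>(i, k) \<omega>. (B (ts (Suc i)) \<omega> - B (ts i) \<omega>) $ k) ({..<n} \<times> (UNIV :: 'd set)))"

definition bm_filtration :: "'a measure \<Rightarrow> (real \<Rightarrow> 'a \<Rightarrow> real^'d) \<Rightarrow> real \<Rightarrow> 'a measure" where
  "bm_filtration M B t = sigma (space M)
     {B s -` A \<inter> space M | s A. 0 \<le> s \<and> s \<le> t \<and> A \<in> sets (borel :: (real^'d) measure)}"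

definition predictable_sigma :: "'a measure \<Rightarrow> (real \<Rightarrow> 'a \<Rightarrow> real^'d) \<Rightarrow> real \<Rightarrow> ('a \<times> real) measure" where
  "predictable_sigma M B T = sigma (space M \<times> {0..T})
     ({A \<times> {0} | A. A \<in> sets (bm_filtration M B 0)} \<union>
      {A \<times> {s<..u} | A s u. 0 \<le> s \<and> s \<le> u \<and> u \<le> T \<and> A \<in> sets (bm_filtration M B s)})"

definition L2F :: "'a measure \<Rightarrow> (real \<Rightarrow> 'a \<Rightarrow> real^'d) \<Rightarrow> real \<Rightarrow> ('a \<Rightarrow> real \<Rightarrow> real) \<Rightarrow> bool" where
  "L2F M B T \<phi> \<longleftrightarrow>
     (\<lambda>(\<omega>, t). \<phi> \<omega> t) \<in> borel_measurable (predictable_sigma M B T) \<and>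
     (\<integral>\<^sup>+\<omega>. (\<integral>\<^sup>+t\<in>{0..T}. ennreal ((\<phi> \<omega> t)\<^sup>2) \<partial>lborel) \<partial>M) < \<infinity>"

definition dyadic :: "real \<Rightarrow> nat \<Rightarrow> nat \<Rightarrow> real" where
  "dyadic T n i = real i * T / 2 ^ n"

end

theory Submission
  imports Defs
begin

text \<open>On [t_i, t_{i+1}) the frozen driver differs from f(s,y,z) by at most \<mu>|Y^{t_i}_s - y|, and
  Y^{t_i}_s - y = -\<integral>_{t_i}^s f(r, Y_r, z) dr + z\<bullet>(B_s - B_{t_i}). Writing f(r, Y_r, z) = f(r, y, z) + O(\<mu>|Y_r - y|)
  and using Cauchy-Schwarz on an interval of length h = T 2^{-n} gives
  \<integral>|Y - y|^2 \<le> 3h^2 \<integral>f^2 + 3\<mu>^2h^2 \<integral>|Y - y|^2 + 3\<integral>|z\<bullet>\<Delta>B|^2, and once 3\<mu>^2h^2 \<le> 1/2 the middle term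
  is absorbed. Summing over the 2^n intervals and taking expectations gives
  E\<integral>|f^n - f|^2 \<le> 6\<mu>^2h^2 E\<integral>f^2 + 6\<mu>^2|z|^2 d T h, which tends to 0.\<close>

lemma power2_sum3_le_ennreal: "(p + q + r :: ennreal)\<^sup>2 \<le> 3 * (p\<^sup>2 + q\<^sup>2 + r\<^sup>2)"
proof (cases "p = \<top> \<or> q = \<top> \<or> r = \<top>")
  case True
  then show ?thesis by (auto simp: ennreal_mult_top)
next
  case False
  then obtain a b c where abc: "p = ennreal a" "q = ennreal b" "r = ennreal c" "0 \<le> a" "0 \<le> b" "0 \<le> c"
    by (metis ennreal_cases)
  have "0 \<le> (a - b)\<^sup>2 + (b - c)\<^sup>2 + (a - c)\<^sup>2" by simp
  then have "(a + b + c)\<^sup>2 \<le> 3 * (a\<^sup>2 + b\<^sup>2 + c\<^sup>2)"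
    by (simp add: power2_eq_square algebra_simps)
  then have "ennreal ((a + b + c)\<^sup>2) \<le> ennreal (3 * (a\<^sup>2 + b\<^sup>2 + c\<^sup>2))"
    by (rule ennreal_leI)
  then show ?thesis
    using abc by (simp add: ennreal_plus[symmetric] ennreal_power numeral_mult_ennreal del: ennreal_plus)
qed

lemma ennreal_le_twice_of_le_half_self_plus:
  fixes \<Phi> R :: ennreal
  assumes le: "\<Phi> \<le> ennreal c * \<Phi> + R" and c: "c \<le> 1/2" and fin: "\<Phi> \<noteq> \<top>"
  shows "\<Phi> \<le> 2 * R"
proof (cases R)
  case (real r)
  obtain \<phi> where \<phi>: "\<Phi> = ennreal \<phi>" "0 \<le> \<phi>" using fin by (cases \<Phi>) auto
  have "\<phi> \<le> max 0 c * \<phi> + r"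
    using le \<phi> real by (cases "0 \<le> c") (simp_all add: ennreal_mult'[symmetric] ennreal_plus[symmetric] ennreal_neg del: ennreal_plus)
  then have "\<phi> \<le> 2 * r"
    using c \<phi>(2) mult_right_mono[of "max 0 c" "1/2" \<phi>] by linarith
  then have "ennreal \<phi> \<le> ennreal (2 * r)" by (rule ennreal_leI)
  then show ?thesis
    using \<phi> real by (simp add: ennreal_mult)
qed simp

lemma nn_integral_Cauchy_Schwarz_subinterval:
  fixes u :: "real \<Rightarrow> real"
  assumes [measurable]: "u \<in> borel_measurable lborel" and s: "s \<in> {t..<t'}"
  shows "(\<integral>\<^sup>+ r. ennreal \<bar>u r\<bar> * indicator {t..s} r \<partial>lborel)\<^sup>2
     \<le> ennreal (t' - t) * (\<integral>\<^sup>+ r. ennreal ((u r)\<^sup>2) * indicator {t..<t'} r \<partial>lborel)"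
proof -
  have "(\<integral>\<^sup>+ r. ennreal \<bar>u r\<bar> * indicator {t..s} r \<partial>lborel)\<^sup>2
     = (\<integral>\<^sup>+ r. (ennreal \<bar>u r\<bar> * indicator {t..s} r) * indicator {t..s} r \<partial>lborel)\<^sup>2"
    by (intro arg_cong[where f = "\<lambda>x. x\<^sup>2"] nn_integral_cong) (simp split: split_indicator)
  also have "\<dots> \<le> (\<integral>\<^sup>+ r. (ennreal \<bar>u r\<bar> * indicator {t..s} r)\<^sup>2 \<partial>lborel)
      * (\<integral>\<^sup>+ r. (indicator {t..s} r :: ennreal)\<^sup>2 \<partial>lborel)"
    by (rule Cauchy_Schwarz_nn_integral) auto
  also have "\<dots> = (\<integral>\<^sup>+ r. ennreal ((u r)\<^sup>2) * indicator {t..s} r \<partial>lborel) * ennreal (s - t)"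
  proof -
    have "\<And>r. (ennreal \<bar>u r\<bar> * indicator {t..s} r)\<^sup>2 = ennreal ((u r)\<^sup>2) * indicator {t..s} r"
      "\<And>r. (indicator {t..s} r :: ennreal)\<^sup>2 = indicator {t..s} r"
      by (simp_all add: ennreal_power split: split_indicator)
    then show ?thesis using s by simp
  qed
  also have "\<dots> \<le> (\<integral>\<^sup>+ r. ennreal ((u r)\<^sup>2) * indicator {t..<t'} r \<partial>lborel) * ennreal (t' - t)"
    using s by (intro mult_mono nn_integral_mono ennreal_leI) (auto split: split_indicator)
  finally show ?thesis by (simp add: mult.commute)
qed

text \<open>No Gronwall argument is needed: Cauchy-Schwarz turns the hypothesis into \<Phi> \<le> 3\<mu>^2h^2 \<Phi> + ... for
  \<Phi> = \<integral>D^2, and the \<Phi>-term is absorbed since 3\<mu>^2h^2 \<le> 1/2. The bound K on D only serves to make \<Phi>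
  finite, which the absorption requires.\<close>

lemma nn_integral_sq_bound_of_integral_inequality:
  fixes D g a :: "real \<Rightarrow> real"
  assumes tt': "t \<le> t'" and \<mu>: "0 \<le> \<mu>" and small: "3 * \<mu>\<^sup>2 * (t' - t)\<^sup>2 \<le> 1/2"
    and [measurable]: "D \<in> borel_measurable lborel" "g \<in> borel_measurable lborel" "a \<in> borel_measurable lborel"
    and D_nonneg: "\<And>s. 0 \<le> D s"
    and D_bounded: "\<And>s. s \<in> {t..<t'} \<Longrightarrow> ennreal (D s) \<le> K" and K: "K \<noteq> \<top>"
    and D_le: "\<And>s. s \<in> {t..<t'} \<Longrightarrow> ennreal (D s) \<le> (\<integral>\<^sup>+ r. ennreal \<bar>g r\<bar> * indicator {t..s} r \<partial>lborel)
          + ennreal \<mu> * (\<integral>\<^sup>+ r. ennreal \<bar>D r\<bar> * indicator {t..s} r \<partial>lborel) + ennreal \<bar>a s\<bar>"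
  shows "(\<integral>\<^sup>+ s. ennreal ((D s)\<^sup>2) * indicator {t..<t'} s \<partial>lborel)
     \<le> ennreal (6 * (t' - t)\<^sup>2) * (\<integral>\<^sup>+ s. ennreal ((g s)\<^sup>2) * indicator {t..<t'} s \<partial>lborel)
       + 6 * (\<integral>\<^sup>+ s. ennreal ((a s)\<^sup>2) * indicator {t..<t'} s \<partial>lborel)"
proof -
  define h where "h = t' - t"
  define \<Phi> where "\<Phi> = (\<integral>\<^sup>+ s. ennreal ((D s)\<^sup>2) * indicator {t..<t'} s \<partial>lborel)"
  define G where "G = (\<integral>\<^sup>+ s. ennreal ((g s)\<^sup>2) * indicator {t..<t'} s \<partial>lborel)"
  define A where "A = (\<integral>\<^sup>+ s. ennreal ((a s)\<^sup>2) * indicator {t..<t'} s \<partial>lborel)"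
  have h: "0 \<le> h" using tt' by (simp add: h_def)
  define X where "X = ennreal (3 * h) * G + ennreal (3 * \<mu>\<^sup>2 * h) * \<Phi>"
  have pointwise: "ennreal ((D s)\<^sup>2) \<le> X + 3 * ennreal ((a s)\<^sup>2)" if s: "s \<in> {t..<t'}" for s
  proof -
    let ?P = "\<integral>\<^sup>+ r. ennreal \<bar>g r\<bar> * indicator {t..s} r \<partial>lborel"
    let ?Q = "\<integral>\<^sup>+ r. ennreal \<bar>D r\<bar> * indicator {t..s} r \<partial>lborel"
    have "ennreal ((D s)\<^sup>2) = (ennreal (D s))\<^sup>2" using D_nonneg by (simp add: ennreal_power)
    also have "\<dots> \<le> (?P + ennreal \<mu> * ?Q + ennreal \<bar>a s\<bar>)\<^sup>2"
      using D_le[OF s] by (intro power_mono) auto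
    also have "\<dots> \<le> 3 * (?P\<^sup>2 + ennreal (\<mu>\<^sup>2) * ?Q\<^sup>2 + ennreal ((a s)\<^sup>2))"
      using power2_sum3_le_ennreal[of ?P "ennreal \<mu> * ?Q" "ennreal \<bar>a s\<bar>"] \<mu>
      by (simp add: power_mult_distrib ennreal_power)
    also have "\<dots> \<le> 3 * (ennreal h * G + ennreal (\<mu>\<^sup>2) * (ennreal h * \<Phi>) + ennreal ((a s)\<^sup>2))"
      unfolding h_def G_def \<Phi>_def
      by (intro mult_left_mono add_mono order_refl nn_integral_Cauchy_Schwarz_subinterval s) auto
    also have "\<dots> = X + 3 * ennreal ((a s)\<^sup>2)"
      using h by (simp add: X_def distrib_left ennreal_mult' mult.assoc)
    finally show ?thesis .
  qed
  have "\<Phi> \<le> (\<integral>\<^sup>+ s. X * indicator {t..<t'} s + 3 * (ennreal ((a s)\<^sup>2) * indicator {t..<t'} s) \<partial>lborel)"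
    unfolding \<Phi>_def using pointwise
    by (intro nn_integral_mono) (auto simp: distrib_right split: split_indicator)
  also have "\<dots> = X * ennreal h + 3 * A"
    using tt' by (subst nn_integral_add) (auto simp: nn_integral_cmult A_def h_def)
  also have "\<dots> = ennreal (3 * \<mu>\<^sup>2 * h\<^sup>2) * \<Phi> + (ennreal (3 * h\<^sup>2) * G + 3 * A)"
    using h \<mu> by (simp add: X_def distrib_left distrib_right ennreal_mult power2_eq_square ac_simps)
  finally have "\<Phi> \<le> 2 * (ennreal (3 * h\<^sup>2) * G + 3 * A)"
  proof (rule ennreal_le_twice_of_le_half_self_plus)
    have "\<Phi> \<le> (\<integral>\<^sup>+ s. K\<^sup>2 * indicator {t..<t'} s \<partial>lborel)"
      unfolding \<Phi>_def using D_bounded D_nonneg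
      by (intro nn_integral_mono) (auto split: split_indicator simp: ennreal_power[symmetric] intro!: power_mono)
    then show "\<Phi> \<noteq> \<top>"
      using tt' K by (auto simp: top_unique nn_integral_cmult_indicator ennreal_mult_eq_top_iff power_eq_top_ennreal)
    show "3 * \<mu>\<^sup>2 * h\<^sup>2 \<le> 1/2" using small by (simp add: h_def)
  qed
  also have "\<dots> = ennreal (6 * h\<^sup>2) * G + 6 * A"
    by (simp add: distrib_left mult.assoc[symmetric] ennreal_mult')
  finally show ?thesis by (simp add: \<Phi>_def G_def A_def h_def)
qed

lemma ennreal_set_integral_abs:
  fixes F :: "'b \<Rightarrow> real"
  assumes "set_integrable M A F"
  shows "ennreal (LINT r:A|M. \<bar>F r\<bar>) = (\<integral>\<^sup>+ r. ennreal \<bar>F r\<bar> * indicator A r \<partial>M)"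
proof -
  have "integrable M (\<lambda>r. indicator A r *\<^sub>R \<bar>F r\<bar>)"
    using set_integrable_norm[OF assms] by (simp add: set_integrable_def)
  then have "ennreal (LINT r:A|M. \<bar>F r\<bar>) = (\<integral>\<^sup>+ r. ennreal (indicator A r *\<^sub>R \<bar>F r\<bar>) \<partial>M)"
    unfolding set_lebesgue_integral_def by (intro nn_integral_eq_integral[symmetric]) auto
  also have "\<dots> = (\<integral>\<^sup>+ r. ennreal \<bar>F r\<bar> * indicator A r \<partial>M)"
    by (intro nn_integral_cong) (simp split: split_indicator)
  finally show ?thesis .
qed

lemma abs_deviation_le_of_integral_equation:
  fixes \<phi> :: "real \<Rightarrow> real"
  assumes integrable: "set_integrable lborel {t..s} \<phi>"
    and equation: "x = y - (LINT r:{t..s}|lborel. \<phi> r) + a"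
  shows "ennreal \<bar>x - y\<bar> \<le> (\<integral>\<^sup>+ r. ennreal \<bar>\<phi> r\<bar> * indicator {t..s} r \<partial>lborel) + ennreal \<bar>a\<bar>"
proof -
  have "\<bar>x - y\<bar> \<le> \<bar>LINT r:{t..s}|lborel. \<phi> r\<bar> + \<bar>a\<bar>"
    using equation by simp
  also have "\<dots> \<le> (LINT r:{t..s}|lborel. \<bar>\<phi> r\<bar>) + \<bar>a\<bar>"
    using set_integral_norm_bound[OF integrable] by simp
  finally have "ennreal \<bar>x - y\<bar> \<le> ennreal ((LINT r:{t..s}|lborel. \<bar>\<phi> r\<bar>) + \<bar>a\<bar>)"
    by (rule ennreal_leI)
  then show ?thesis
    by (simp add: ennreal_set_integral_abs[OF integrable, symmetric] set_lebesgue_integral_def)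
qed

lemma ennreal_deviation_le_of_lipschitz_integral_equation:
  fixes F :: "real \<Rightarrow> real \<Rightarrow> real" and X g D :: "real \<Rightarrow> real"
  assumes \<mu>: "0 \<le> \<mu>" and [measurable]: "g \<in> borel_measurable lborel" "D \<in> borel_measurable lborel"
    and lip: "\<And>r. r \<in> {t..s} \<Longrightarrow> \<bar>F r (X r) - g r\<bar> \<le> \<mu> * D r"
    and integrable: "set_integrable lborel {t..s} (\<lambda>r. F r (X r))"
    and equation: "X s = y - (LINT r:{t..s}|lborel. F r (X r)) + a"
  shows "ennreal \<bar>X s - y\<bar> \<le> (\<integral>\<^sup>+ r. ennreal \<bar>g r\<bar> * indicator {t..s} r \<partial>lborel)
      + ennreal \<mu> * (\<integral>\<^sup>+ r. ennreal \<bar>D r\<bar> * indicator {t..s} r \<partial>lborel) + ennreal \<bar>a\<bar>"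
proof -
  have "(\<integral>\<^sup>+ r. ennreal \<bar>F r (X r)\<bar> * indicator {t..s} r \<partial>lborel)
      \<le> (\<integral>\<^sup>+ r. ennreal \<bar>g r\<bar> * indicator {t..s} r + ennreal \<mu> * (ennreal \<bar>D r\<bar> * indicator {t..s} r) \<partial>lborel)"
  proof (intro nn_integral_mono)
    fix r
    have "r \<in> {t..s} \<Longrightarrow> \<bar>F r (X r)\<bar> \<le> \<bar>g r\<bar> + \<mu> * \<bar>D r\<bar>"
      using lip[of r] \<mu> abs_ge_self[of "D r"] mult_left_mono[of "D r" "\<bar>D r\<bar>" \<mu>] by linarith
    then show "ennreal \<bar>F r (X r)\<bar> * indicator {t..s} r
        \<le> ennreal \<bar>g r\<bar> * indicator {t..s} r + ennreal \<mu> * (ennreal \<bar>D r\<bar> * indicator {t..s} r)"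
      using \<mu> by (auto split: split_indicator simp: ennreal_mult[symmetric] ennreal_plus[symmetric] ennreal_leI
          simp del: ennreal_plus)
  qed
  also have "\<dots> = (\<integral>\<^sup>+ r. ennreal \<bar>g r\<bar> * indicator {t..s} r \<partial>lborel)
      + ennreal \<mu> * (\<integral>\<^sup>+ r. ennreal \<bar>D r\<bar> * indicator {t..s} r \<partial>lborel)"
    by (simp add: nn_integral_add nn_integral_cmult)
  finally show ?thesis
    using abs_deviation_le_of_integral_equation[OF integrable equation] by (elim order.trans add_mono) simp
qed

lemma nn_integral_sq_deviation_of_integral_equation:
  fixes F :: "real \<Rightarrow> real \<Rightarrow> real" and X g \<beta> :: "real \<Rightarrow> real"
  assumes tt': "t \<le> t'" and t'T: "t' \<le> T" and \<mu>: "0 \<le> \<mu>" and small: "3 * \<mu>\<^sup>2 * (t' - t)\<^sup>2 \<le> 1/2"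
    and lip: "\<And>r x x'. r \<in> {t..T} \<Longrightarrow> \<bar>F r x - F r x'\<bar> \<le> \<mu> * \<bar>x - x'\<bar>"
    and g_meas: "g \<in> borel_measurable lborel" and g_eq: "\<And>r. r \<in> {t..T} \<Longrightarrow> g r = F r y"
    and X_meas: "X \<in> borel_measurable (restrict_space lborel {t..T})"
    and \<beta>_meas: "\<beta> \<in> borel_measurable lborel" and \<beta>_cont: "continuous_on {t..T} \<beta>"
    and integrable: "\<And>s. s \<in> {t..T} \<Longrightarrow> set_integrable lborel {t..s} (\<lambda>r. F r (X r))"
    and equation: "\<And>s. s \<in> {t..T} \<Longrightarrow> X s = y - (LINT r:{t..s}|lborel. F r (X r)) + (\<beta> s - \<beta> t)"
  shows "(\<integral>\<^sup>+ s. ennreal ((X s - y)\<^sup>2) * indicator {t..<t'} s \<partial>lborel)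
     \<le> ennreal (6 * (t' - t)\<^sup>2) * (\<integral>\<^sup>+ s. ennreal ((g s)\<^sup>2) * indicator {t..<t'} s \<partial>lborel)
       + 6 * (\<integral>\<^sup>+ s. ennreal ((\<beta> s - \<beta> t)\<^sup>2) * indicator {t..<t'} s \<partial>lborel)"
proof -
  define D where "D s = \<bar>X s - y\<bar> * indicator {t..T} s" for s
  define a where "a s = \<beta> s - \<beta> t" for s
  have D_meas [measurable]: "D \<in> borel_measurable lborel"
  proof -
    have "(\<lambda>s. indicator {t..T} s *\<^sub>R X s) \<in> borel_measurable lborel"
      using X_meas by (subst (asm) borel_measurable_restrict_space_iff) auto
    then have "(\<lambda>s. \<bar>indicator {t..T} s *\<^sub>R X s - y * indicator {t..T} s\<bar>) \<in> borel_measurable lborel"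
      by measurable
    then show ?thesis
      by (rule measurable_cong[THEN iffD1, rotated]) (auto simp: D_def split: split_indicator)
  qed
  have a_meas [measurable]: "a \<in> borel_measurable lborel"
    using \<beta>_meas unfolding a_def by measurable
  have D_le: "ennreal (D s) \<le> (\<integral>\<^sup>+ r. ennreal \<bar>g r\<bar> * indicator {t..s} r \<partial>lborel)
      + ennreal \<mu> * (\<integral>\<^sup>+ r. ennreal \<bar>D r\<bar> * indicator {t..s} r \<partial>lborel) + ennreal \<bar>a s\<bar>"
    if s: "s \<in> {t..T}" for s
  proof -
    have "\<bar>F r (X r) - g r\<bar> \<le> \<mu> * D r" if "r \<in> {t..s}" for r
      using lip[of r "X r" y] that s by (simp add: g_eq D_def)
    from ennreal_deviation_le_of_lipschitz_integral_equation[where F = F and X = X,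
        OF \<mu> g_meas D_meas this integrable[OF s] equation[OF s]]
    show ?thesis using s by (simp add: D_def a_def)
  qed
  obtain Ka where Ka: "\<And>s. s \<in> {t..T} \<Longrightarrow> \<bar>a s\<bar> \<le> Ka"
  proof -
    have "compact (a ` {t..T})"
      unfolding a_def by (intro compact_continuous_image continuous_intros \<beta>_cont) simp
    then show ?thesis
      using that by (meson compact_imp_bounded bounded_real image_eqI)
  qed
  have D_bounded: "ennreal (D s) \<le> (\<integral>\<^sup>+ r. ennreal \<bar>F r (X r)\<bar> * indicator {t..T} r \<partial>lborel) + ennreal Ka"
    if s: "s \<in> {t..<t'}" for s
  proof -
    have sT: "s \<in> {t..T}" using s t'T by auto
    from abs_deviation_le_of_integral_equation[OF integrable[OF sT] equation[OF sT]]
    have "ennreal (D s) \<le> (\<integral>\<^sup>+ r. ennreal \<bar>F r (X r)\<bar> * indicator {t..s} r \<partial>lborel) + ennreal \<bar>a s\<bar>"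
      using sT by (simp add: D_def a_def)
    then show ?thesis
      by (rule order.trans, intro add_mono nn_integral_mono ennreal_leI)
         (use sT Ka[OF sT] in \<open>auto split: split_indicator\<close>)
  qed
  have "T \<in> {t..T}" using tt' t'T by simp
  then have fin: "(\<integral>\<^sup>+ r. ennreal \<bar>F r (X r)\<bar> * indicator {t..T} r \<partial>lborel) \<noteq> \<top>"
    by (simp add: ennreal_set_integral_abs[OF integrable, symmetric])
  have "(\<integral>\<^sup>+ s. ennreal ((D s)\<^sup>2) * indicator {t..<t'} s \<partial>lborel)
     \<le> ennreal (6 * (t' - t)\<^sup>2) * (\<integral>\<^sup>+ s. ennreal ((g s)\<^sup>2) * indicator {t..<t'} s \<partial>lborel)
       + 6 * (\<integral>\<^sup>+ s. ennreal ((a s)\<^sup>2) * indicator {t..<t'} s \<partial>lborel)"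
    using t'T
    by (intro nn_integral_sq_bound_of_integral_inequality[OF tt' \<mu> small D_meas g_meas a_meas _ D_bounded])
       (use fin D_le in \<open>auto simp: D_def\<close>)
  moreover have "(\<integral>\<^sup>+ s. ennreal ((D s)\<^sup>2) * indicator {t..<t'} s \<partial>lborel)
      = (\<integral>\<^sup>+ s. ennreal ((X s - y)\<^sup>2) * indicator {t..<t'} s \<partial>lborel)"
    using t'T by (intro nn_integral_cong) (auto simp: D_def split: split_indicator)
  ultimately show ?thesis by (simp add: a_def)
qed

lemma dyadic_Suc: "dyadic T n (Suc i) = dyadic T n i + T / 2 ^ n"
  by (simp add: dyadic_def add_divide_distrib distrib_right)

lemma dyadic_nonneg: "0 \<le> T \<Longrightarrow> 0 \<le> dyadic T n i"
  by (simp add: dyadic_def)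

lemma dyadic_le:
  assumes "0 \<le> T" "i \<le> 2 ^ n"
  shows "dyadic T n i \<le> T"
proof -
  have "real i \<le> 2 ^ n" using assms(2) by (metis of_nat_le_iff of_nat_numeral of_nat_power)
  then have "real i * T \<le> 2 ^ n * T" using assms(1) by (rule mult_right_mono)
  then have "real i * T / 2 ^ n \<le> 2 ^ n * T / 2 ^ n" by (rule divide_right_mono) simp
  then show ?thesis by (simp add: dyadic_def)
qed

lemma dyadic_interval_unique:
  assumes T: "0 < T"
    and "s \<in> {dyadic T n i..<dyadic T n (Suc i)}" "s \<in> {dyadic T n j..<dyadic T n (Suc j)}"
  shows "i = j"
proof -
  define h where "h = T / 2 ^ n"
  have h: "0 < h" using T by (simp add: h_def)
  have "dyadic T n k = real k * h" for k by (simp add: dyadic_def h_def)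
  then have "real i * h < real (Suc j) * h" "real j * h < real (Suc i) * h"
    using assms(2,3) by auto
  then have "real i < real (Suc j)" "real j < real (Suc i)"
    using h by (auto simp: mult_less_cancel_right)
  then show ?thesis by simp
qed

lemma dyadic_interval_exists:
  assumes T: "0 < T" and s: "0 \<le> s" "s < T"
  obtains i where "i < 2 ^ n" "s \<in> {dyadic T n i..<dyadic T n (Suc i)}"
proof -
  define h where "h = T / 2 ^ n"
  have h: "0 < h" using T by (simp add: h_def)
  define i where "i = nat \<lfloor>s / h\<rfloor>"
  have i: "real i = of_int \<lfloor>s / h\<rfloor>" using s h by (simp add: i_def)
  have "real i \<le> s / h" "s / h < real i + 1" using i by linarith+
  then have lo: "real i * h \<le> s" and hi: "s < (real i + 1) * h"
    using h by (simp_all add: pos_le_divide_eq pos_divide_less_eq)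
  have "real i * h < 2 ^ n * h" using lo s by (simp add: h_def)
  then have "real i < 2 ^ n" using h by simp
  then have "i < 2 ^ n" by (metis of_nat_less_iff of_nat_numeral of_nat_power)
  moreover have "s \<in> {dyadic T n i..<dyadic T n (Suc i)}"
    using lo hi by (simp add: dyadic_def h_def algebra_simps)
  ultimately show ?thesis by (rule that)
qed

lemma sum_dyadic_indicator_eq:
  fixes F :: "nat \<Rightarrow> 'b::semiring_1"
  assumes T: "0 < T" and i: "i < 2 ^ n" and s: "s \<in> {dyadic T n i..<dyadic T n (Suc i)}"
  shows "(\<Sum>j<2 ^ n. F j * indicator {dyadic T n j..<dyadic T n (Suc j)} s) = F i"
proof -
  have "(\<Sum>j<2 ^ n. F j * indicator {dyadic T n j..<dyadic T n (Suc j)} s) = (\<Sum>j<2 ^ n. if j = i then F j else 0)"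
  proof (rule sum.cong)
    fix j :: nat assume "j \<in> {..<2 ^ n}"
    show "F j * indicator {dyadic T n j..<dyadic T n (Suc j)} s = (if j = i then F j else 0)"
      using dyadic_interval_unique[OF T s, of j] s by (cases "j = i") (auto simp: indicator_def)
  qed simp
  then show ?thesis using i by simp
qed

lemma sum_dyadic_indicator_le:
  assumes T: "0 < T"
  shows "(\<Sum>j<2 ^ n. indicator {dyadic T n j..<dyadic T n (Suc j)} s :: ennreal) \<le> indicator {0..T} s"
proof (cases "\<exists>i<2 ^ n. s \<in> {dyadic T n i..<dyadic T n (Suc i)}")
  case True
  then obtain i where i: "i < 2 ^ n" "s \<in> {dyadic T n i..<dyadic T n (Suc i)}" by blast
  then have "s \<in> {0..T}"
    using T dyadic_nonneg[of T n i] dyadic_le[of T "Suc i" n] by auto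
  with sum_dyadic_indicator_eq[OF T i, of "\<lambda>_. 1 :: ennreal"] show ?thesis by simp
next
  case False
  then have "(\<Sum>j<2 ^ n. indicator {dyadic T n j..<dyadic T n (Suc j)} s :: ennreal) = 0"
    by (intro sum.neutral) (use False in \<open>simp add: indicator_def\<close>)
  then show ?thesis by simp
qed

lemma sum_nn_integral_dyadic_le:
  fixes u :: "real \<Rightarrow> ennreal"
  assumes T: "0 < T" and [measurable]: "u \<in> borel_measurable lborel"
  shows "(\<Sum>i<2 ^ n. \<integral>\<^sup>+ s. u s * indicator {dyadic T n i..<dyadic T n (Suc i)} s \<partial>lborel)
    \<le> (\<integral>\<^sup>+ s. u s * indicator {0..T} s \<partial>lborel)"
proof -
  have "(\<Sum>i<2 ^ n. \<integral>\<^sup>+ s. u s * indicator {dyadic T n i..<dyadic T n (Suc i)} s \<partial>lborel)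
      = (\<integral>\<^sup>+ s. u s * (\<Sum>i<2 ^ n. indicator {dyadic T n i..<dyadic T n (Suc i)} s) \<partial>lborel)"
    unfolding sum_distrib_left by (rule nn_integral_sum[symmetric]) simp
  also have "\<dots> \<le> (\<integral>\<^sup>+ s. u s * indicator {0..T} s \<partial>lborel)"
    by (intro nn_integral_mono mult_left_mono sum_dyadic_indicator_le T) simp
  finally show ?thesis .
qed

lemma ennreal_sq_frozen_sum_le:
  fixes F :: "real \<Rightarrow> real \<Rightarrow> real" and X :: "real \<Rightarrow> real \<Rightarrow> real"
  assumes T: "0 < T" and s: "0 \<le> s" "s < T" and lip: "\<And>x x'. \<bar>F s x - F s x'\<bar> \<le> \<mu> * \<bar>x - x'\<bar>"
  shows "ennreal (((\<Sum>i<2 ^ n. F s (X (dyadic T n i) s) * indicator {dyadic T n i..<dyadic T n (Suc i)} s) - F s y)\<^sup>2)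
    \<le> (\<Sum>i<2 ^ n. ennreal (\<mu>\<^sup>2) * (ennreal ((X (dyadic T n i) s - y)\<^sup>2)
          * indicator {dyadic T n i..<dyadic T n (Suc i)} s))"
proof -
  obtain i where i: "i < 2 ^ n" "s \<in> {dyadic T n i..<dyadic T n (Suc i)}"
    using dyadic_interval_exists[OF T s] .
  have "(F s (X (dyadic T n i) s) - F s y)\<^sup>2 \<le> \<mu>\<^sup>2 * (X (dyadic T n i) s - y)\<^sup>2"
    using lip[of "X (dyadic T n i) s" y] by (metis abs_ge_zero power2_abs power_mono power_mult_distrib)
  then have "ennreal ((F s (X (dyadic T n i) s) - F s y)\<^sup>2)
      \<le> ennreal (\<mu>\<^sup>2) * (ennreal ((X (dyadic T n i) s - y)\<^sup>2) * indicator {dyadic T n i..<dyadic T n (Suc i)} s)"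
    using i by (simp add: ennreal_mult[symmetric] ennreal_leI)
  also have "\<dots> \<le> (\<Sum>i<2 ^ n. ennreal (\<mu>\<^sup>2) * (ennreal ((X (dyadic T n i) s - y)\<^sup>2)
      * indicator {dyadic T n i..<dyadic T n (Suc i)} s))"
    using i(1) by (intro member_le_sum) auto
  finally show ?thesis
    using sum_dyadic_indicator_eq[OF T i, of "\<lambda>j. F s (X (dyadic T n j) s)"] by simp
qed

lemma nn_integral_sq_frozen_sum_le:
  fixes F :: "real \<Rightarrow> real \<Rightarrow> real" and X :: "real \<Rightarrow> real \<Rightarrow> real"
  assumes T: "0 < T"
    and lip: "\<And>r x x'. r \<in> {0..T} \<Longrightarrow> \<bar>F r x - F r x'\<bar> \<le> \<mu> * \<bar>x - x'\<bar>"
    and X_meas: "\<And>i. i < 2 ^ n \<Longrightarrow> X (dyadic T n i) \<in> borel_measurable (restrict_space lborel {dyadic T n i..T})"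
  shows "(\<integral>\<^sup>+ s. ennreal (((\<Sum>i<2 ^ n. F s (X (dyadic T n i) s) * indicator {dyadic T n i..<dyadic T n (Suc i)} s)
            - F s y)\<^sup>2) * indicator {0..T} s \<partial>lborel)
    \<le> ennreal (\<mu>\<^sup>2) * (\<Sum>i<2 ^ n. \<integral>\<^sup>+ s. ennreal ((X (dyadic T n i) s - y)\<^sup>2)
            * indicator {dyadic T n i..<dyadic T n (Suc i)} s \<partial>lborel)"
proof -
  define I where "I i = {dyadic T n i..<dyadic T n (Suc i)}" for i
  have X_sq_meas: "(\<lambda>s. ennreal ((X (dyadic T n i) s - y)\<^sup>2) * indicator (I i) s) \<in> borel_measurable lborel"
    if i: "i < 2 ^ n" for i
  proof -
    have "(\<lambda>s. indicator {dyadic T n i..T} s *\<^sub>R X (dyadic T n i) s) \<in> borel_measurable lborel"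
      using X_meas[OF i] by (subst (asm) borel_measurable_restrict_space_iff) auto
    then have "(\<lambda>s. ennreal ((indicator {dyadic T n i..T} s *\<^sub>R X (dyadic T n i) s - y)\<^sup>2) * indicator (I i) s)
        \<in> borel_measurable lborel"
      unfolding I_def by measurable
    moreover have "I i \<subseteq> {dyadic T n i..T}"
      using T i dyadic_le[of T "Suc i" n] by (auto simp: I_def)
    ultimately show ?thesis
      by (subst measurable_cong[where g = "\<lambda>s. ennreal ((indicator {dyadic T n i..T} s *\<^sub>R X (dyadic T n i) s - y)\<^sup>2)
          * indicator (I i) s"]) (auto split: split_indicator)
  qed
  have "AE s in lborel. ennreal (((\<Sum>i<2 ^ n. F s (X (dyadic T n i) s) * indicator (I i) s) - F s y)\<^sup>2)
      * indicator {0..T} s \<le> (\<Sum>i<2 ^ n. ennreal (\<mu>\<^sup>2) * (ennreal ((X (dyadic T n i) s - y)\<^sup>2) * indicator (I i) s))"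
    using AE_lborel_singleton[of T]
  proof eventually_elim
    case (elim s)
    show ?case
    proof (cases "0 \<le> s \<and> s < T")
      case True
      then show ?thesis
        using ennreal_sq_frozen_sum_le[where F = F and X = X and y = y and n = n, OF T] lip
        by (simp add: I_def)
    qed (use elim in auto)
  qed
  then have "(\<integral>\<^sup>+ s. ennreal (((\<Sum>i<2 ^ n. F s (X (dyadic T n i) s) * indicator (I i) s) - F s y)\<^sup>2)
      * indicator {0..T} s \<partial>lborel)
      \<le> (\<integral>\<^sup>+ s. (\<Sum>i<2 ^ n. ennreal (\<mu>\<^sup>2) * (ennreal ((X (dyadic T n i) s - y)\<^sup>2) * indicator (I i) s)) \<partial>lborel)"
    by (rule nn_integral_mono_AE)
  also have "\<dots> = ennreal (\<mu>\<^sup>2) * (\<Sum>i<2 ^ n. \<integral>\<^sup>+ s. ennreal ((X (dyadic T n i) s - y)\<^sup>2) * indicator (I i) s \<partial>lborel)"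
    using X_sq_meas by (subst nn_integral_sum) (auto simp: nn_integral_cmult sum_distrib_left)
  finally show ?thesis by (simp add: I_def)
qed

lemma nn_integral_sq_dyadic_freezing_error:
  fixes F :: "real \<Rightarrow> real \<Rightarrow> real" and X :: "real \<Rightarrow> real \<Rightarrow> real" and \<beta> :: "real \<Rightarrow> real"
  assumes T: "0 < T" and small: "3 * \<mu>\<^sup>2 * (T / 2 ^ n)\<^sup>2 \<le> 1/2"
    and lip: "\<And>r x x'. r \<in> {0..T} \<Longrightarrow> \<bar>F r x - F r x'\<bar> \<le> \<mu> * \<bar>x - x'\<bar>"
    and g_meas: "(\<lambda>r. F r y * indicator {0..T} r) \<in> borel_measurable lborel"
    and \<beta>_meas: "\<beta> \<in> borel_measurable lborel" and \<beta>_cont: "continuous_on {0..T} \<beta>"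
    and X_meas: "\<And>i. i < 2 ^ n \<Longrightarrow> X (dyadic T n i) \<in> borel_measurable (restrict_space lborel {dyadic T n i..T})"
    and integrable: "\<And>i s. i < 2 ^ n \<Longrightarrow> s \<in> {dyadic T n i..T} \<Longrightarrow>
      set_integrable lborel {dyadic T n i..s} (\<lambda>r. F r (X (dyadic T n i) r))"
    and equation: "\<And>i s. i < 2 ^ n \<Longrightarrow> s \<in> {dyadic T n i..T} \<Longrightarrow>
      X (dyadic T n i) s = y - (LINT r:{dyadic T n i..s}|lborel. F r (X (dyadic T n i) r)) + (\<beta> s - \<beta> (dyadic T n i))"
  shows "(\<integral>\<^sup>+ s. ennreal (((\<Sum>i<2 ^ n. F s (X (dyadic T n i) s) * indicator {dyadic T n i..<dyadic T n (Suc i)} s)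
            - F s y)\<^sup>2) * indicator {0..T} s \<partial>lborel)
    \<le> ennreal (6 * \<mu>\<^sup>2 * (T / 2 ^ n)\<^sup>2) * (\<integral>\<^sup>+ s. ennreal ((F s y)\<^sup>2) * indicator {0..T} s \<partial>lborel)
      + ennreal (6 * \<mu>\<^sup>2) * (\<Sum>i<2 ^ n. \<integral>\<^sup>+ s. ennreal ((\<beta> s - \<beta> (dyadic T n i))\<^sup>2)
            * indicator {dyadic T n i..<dyadic T n (Suc i)} s \<partial>lborel)"
proof -
  define h where "h = T / 2 ^ n"
  define I where "I i = {dyadic T n i..<dyadic T n (Suc i)}" for i
  define g where "g r = F r y * indicator {0..T} r" for r
  define G where "G i = (\<integral>\<^sup>+ s. ennreal ((g s)\<^sup>2) * indicator (I i) s \<partial>lborel)" for i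
  define A where "A i = (\<integral>\<^sup>+ s. ennreal ((\<beta> s - \<beta> (dyadic T n i))\<^sup>2) * indicator (I i) s \<partial>lborel)" for i
  have \<mu>: "0 \<le> \<mu>" using lip[of 0 1 0] T by simp
  have [measurable]: "g \<in> borel_measurable lborel" using g_meas by (simp add: g_def[abs_def])
  have interval: "(\<integral>\<^sup>+ s. ennreal ((X (dyadic T n i) s - y)\<^sup>2) * indicator (I i) s \<partial>lborel)
      \<le> ennreal (6 * h\<^sup>2) * G i + 6 * A i" if i: "i < 2 ^ n" for i
  proof -
    have t: "0 \<le> dyadic T n i" "dyadic T n i \<le> dyadic T n (Suc i)" "dyadic T n (Suc i) \<le> T"
      using T i dyadic_le[of T "Suc i" n] by (simp_all add: dyadic_nonneg dyadic_Suc)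
    have "(\<integral>\<^sup>+ s. ennreal ((X (dyadic T n i) s - y)\<^sup>2) * indicator (I i) s \<partial>lborel)
        \<le> ennreal (6 * (dyadic T n (Suc i) - dyadic T n i)\<^sup>2) * G i + 6 * A i"
      unfolding I_def G_def A_def
    proof (rule nn_integral_sq_deviation_of_integral_equation[where F = F and y = y, OF t(2,3) \<mu>])
      show "3 * \<mu>\<^sup>2 * (dyadic T n (Suc i) - dyadic T n i)\<^sup>2 \<le> 1/2"
        using small by (simp add: dyadic_Suc)
      show "continuous_on {dyadic T n i..T} \<beta>"
        using t by (intro continuous_on_subset[OF \<beta>_cont]) auto
      show "\<bar>F r x - F r x'\<bar> \<le> \<mu> * \<bar>x - x'\<bar>" if "r \<in> {dyadic T n i..T}" for r x x'
        using that t by (intro lip) auto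
      show "g r = F r y" if "r \<in> {dyadic T n i..T}" for r
        using that t by (simp add: g_def)
    qed (use X_meas[OF i] \<beta>_meas integrable[OF i] equation[OF i] in auto)
    then show ?thesis by (simp add: dyadic_Suc h_def)
  qed
  have G_sum: "(\<Sum>i<2 ^ n. G i) \<le> (\<integral>\<^sup>+ s. ennreal ((F s y)\<^sup>2) * indicator {0..T} s \<partial>lborel)"
  proof -
    have "(\<Sum>i<2 ^ n. G i) \<le> (\<integral>\<^sup>+ s. ennreal ((g s)\<^sup>2) * indicator {0..T} s \<partial>lborel)"
      unfolding G_def I_def by (rule sum_nn_integral_dyadic_le[OF T]) measurable
    also have "\<dots> = (\<integral>\<^sup>+ s. ennreal ((F s y)\<^sup>2) * indicator {0..T} s \<partial>lborel)"
      by (intro nn_integral_cong) (simp add: g_def split: split_indicator)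
    finally show ?thesis .
  qed
  have "(\<integral>\<^sup>+ s. ennreal (((\<Sum>i<2 ^ n. F s (X (dyadic T n i) s) * indicator (I i) s) - F s y)\<^sup>2)
        * indicator {0..T} s \<partial>lborel)
      \<le> ennreal (\<mu>\<^sup>2) * (\<Sum>i<2 ^ n. \<integral>\<^sup>+ s. ennreal ((X (dyadic T n i) s - y)\<^sup>2) * indicator (I i) s \<partial>lborel)"
    unfolding I_def by (rule nn_integral_sq_frozen_sum_le[where F = F and X = X, OF T lip X_meas])
  also have "\<dots> \<le> ennreal (\<mu>\<^sup>2) * (\<Sum>i<2 ^ n. ennreal (6 * h\<^sup>2) * G i + 6 * A i)"
    by (intro mult_left_mono sum_mono interval) auto
  also have "\<dots> = ennreal (6 * \<mu>\<^sup>2 * h\<^sup>2) * (\<Sum>i<2 ^ n. G i) + ennreal (6 * \<mu>\<^sup>2) * (\<Sum>i<2 ^ n. A i)"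
  proof -
    have "ennreal (\<mu>\<^sup>2) * ennreal (6 * h\<^sup>2) = ennreal (6 * \<mu>\<^sup>2 * h\<^sup>2)"
      by (simp add: ennreal_mult[symmetric] mult.commute mult.left_commute)
    moreover have "ennreal (\<mu>\<^sup>2) * 6 = ennreal (6 * \<mu>\<^sup>2)"
      by (simp add: ennreal_mult' mult.commute)
    ultimately show ?thesis
      by (simp add: distrib_left sum.distrib sum_distrib_left mult.assoc[symmetric])
  qed
  also have "\<dots> \<le> ennreal (6 * \<mu>\<^sup>2 * h\<^sup>2) * (\<integral>\<^sup>+ s. ennreal ((F s y)\<^sup>2) * indicator {0..T} s \<partial>lborel)
      + ennreal (6 * \<mu>\<^sup>2) * (\<Sum>i<2 ^ n. A i)"
    using G_sum by (intro add_mono mult_left_mono) auto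
  finally show ?thesis by (simp add: I_def A_def h_def)
qed

lemma sets_bm_filtration_subset:
  fixes B :: "real \<Rightarrow> 'a \<Rightarrow> real^'d"
  assumes Bm: "\<And>t. B t \<in> borel_measurable M"
  shows "sets (bm_filtration M B t) \<subseteq> sets M"
proof -
  let ?C = "{B s -` A \<inter> space M | s A. 0 \<le> s \<and> s \<le> t \<and> A \<in> sets borel}"
  have C: "?C \<subseteq> Pow (space M)" by auto
  have "?C \<subseteq> sets M" using Bm by (auto intro: measurable_sets)
  then have "sigma_sets (space M) ?C \<subseteq> sets M" by (rule sets.sigma_sets_subset)
  then show ?thesis unfolding bm_filtration_def using C by (simp add: sets_measure_of)
qed

lemma sets_predictable_sigma_subset:
  fixes B :: "real \<Rightarrow> 'a \<Rightarrow> real^'d"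
  assumes Bm: "\<And>t. B t \<in> borel_measurable M" and T: "0 \<le> T"
  shows "sets (predictable_sigma M B T) \<subseteq> sets (restrict_space (M \<Otimes>\<^sub>M lborel) (space M \<times> {0..T}))"
proof -
  let ?\<Omega> = "space M \<times> {0..T}"
  let ?R = "restrict_space (M \<Otimes>\<^sub>M lborel) ?\<Omega>"
  let ?G = "{A \<times> {0} | A. A \<in> sets (bm_filtration M B 0)} \<union>
      {A \<times> {s<..u} | A s u. 0 \<le> s \<and> s \<le> u \<and> u \<le> T \<and> A \<in> sets (bm_filtration M B s)}"
  have \<Omega>: "?\<Omega> \<inter> space (M \<Otimes>\<^sub>M lborel) = ?\<Omega>"
    by (simp add: space_pair_measure Times_Int_Times)
  have G: "X \<subseteq> ?\<Omega> \<and> X \<in> sets (M \<Otimes>\<^sub>M lborel)" if X: "X \<in> ?G" for X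
  proof -
    from X have "(\<exists>A. X = A \<times> {0} \<and> A \<in> sets (bm_filtration M B 0)) \<or>
      (\<exists>A s u. X = A \<times> {s<..u} \<and> 0 \<le> s \<and> s \<le> u \<and> u \<le> T \<and> A \<in> sets (bm_filtration M B s))"
      by (simp only: Un_iff mem_Collect_eq)
    moreover have "sets (bm_filtration M B s) \<subseteq> sets M" for s
      by (rule sets_bm_filtration_subset[OF Bm])
    ultimately show ?thesis
      using T by (elim disjE exE conjE) (auto dest!: subsetD dest: sets.sets_into_space intro!: pair_measureI)
  qed
  have "?G \<subseteq> sets ?R"
  proof
    fix X assume "X \<in> ?G"
    then have "X \<subseteq> ?\<Omega> \<and> X \<in> sets (M \<Otimes>\<^sub>M lborel)" by (rule G)
    moreover have "?\<Omega> \<inter> space (M \<Otimes>\<^sub>M lborel) \<in> sets (M \<Otimes>\<^sub>M lborel)"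
      unfolding \<Omega> by (intro pair_measureI) auto
    ultimately show "X \<in> sets ?R" by (simp add: sets_restrict_space_iff \<Omega>)
  qed
  then have "sigma_sets (space ?R) ?G \<subseteq> sets ?R"
    by (rule sets.sigma_sets_subset)
  moreover have "space ?R = ?\<Omega>"
    by (simp add: space_restrict_space \<Omega>)
  moreover have "?G \<subseteq> Pow ?\<Omega>"
    using G by blast
  then have "sets (predictable_sigma M B T) = sigma_sets ?\<Omega> ?G"
    unfolding predictable_sigma_def by (rule sets_measure_of)
  ultimately show ?thesis by simp
qed

lemma borel_measurable_predictable_process:
  fixes \<phi> :: "'a \<Rightarrow> real \<Rightarrow> real" and B :: "real \<Rightarrow> 'a \<Rightarrow> real^'d"
  assumes Bm: "\<And>t. B t \<in> borel_measurable M" and T: "0 \<le> T"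
    and \<phi>: "(\<lambda>(\<omega>, t). \<phi> \<omega> t) \<in> borel_measurable (predictable_sigma M B T)"
  shows "(\<lambda>(\<omega>, t). \<phi> \<omega> t * indicator {0..T} t) \<in> borel_measurable (M \<Otimes>\<^sub>M lborel)"
proof -
  let ?\<Omega> = "space M \<times> {0..T}"
  have \<Omega>: "?\<Omega> \<inter> space (M \<Otimes>\<^sub>M lborel) \<in> sets (M \<Otimes>\<^sub>M lborel)"
    by (simp add: space_pair_measure Times_Int_Times pair_measureI)
  have "space (predictable_sigma M B T) = space (restrict_space (M \<Otimes>\<^sub>M lborel) ?\<Omega>)"
    by (simp add: predictable_sigma_def space_measure_of_conv space_restrict_space space_pair_measure Times_Int_Times)
  from measurable_mono[of borel borel, OF order_refl refl sets_predictable_sigma_subset[OF Bm T] this] \<phi>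
  have "(\<lambda>(\<omega>, t). \<phi> \<omega> t) \<in> borel_measurable (restrict_space (M \<Otimes>\<^sub>M lborel) ?\<Omega>)"
    by blast
  then have "(\<lambda>x. indicator ?\<Omega> x *\<^sub>R (case x of (\<omega>, t) \<Rightarrow> \<phi> \<omega> t)) \<in> borel_measurable (M \<Otimes>\<^sub>M lborel)"
    using borel_measurable_restrict_space_iff[OF \<Omega>] by blast
  then show ?thesis
    by (rule measurable_cong[THEN iffD1, rotated]) (auto simp: space_pair_measure indicator_def)
qed

lemma ceiling_mult_divide_bounds:
  fixes c x :: real assumes c: "0 < c"
  shows "x \<le> real_of_int \<lceil>c*x\<rceil> / c" "real_of_int \<lceil>c*x\<rceil> / c \<le> x + 1/c"
proof -
  show "x \<le> real_of_int \<lceil>c*x\<rceil> / c"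
    using le_of_int_ceiling[of "c*x"] c by (simp add: pos_le_divide_eq mult.commute)
  have "real_of_int \<lceil>c*x\<rceil> \<le> c*x + 1" using ceiling_correct[of "c*x"] by linarith
  then have "real_of_int \<lceil>c*x\<rceil> / c \<le> (c*x+1)/c" using c by (intro divide_right_mono) auto
  also have "(c*x+1)/c = x + 1/c" using c by (simp add: add_divide_distrib)
  finally show "real_of_int \<lceil>c*x\<rceil> / c \<le> x + 1/c" .
qed

text \<open>Evaluating at the grid points \<lceil>k s\<rceil>/k \<ge> s gives countably-valued, hence jointly measurable,
  approximations, which converge by continuity of the paths.\<close>

lemma borel_measurable_continuous_process:
  fixes B :: "real \<Rightarrow> 'a \<Rightarrow> 'b::metric_space"
  assumes Bm: "\<And>t. B t \<in> borel_measurable M"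
    and cont: "\<And>\<omega>. \<omega> \<in> space M \<Longrightarrow> continuous_on {0..} (\<lambda>t. B t \<omega>)"
  shows "(\<lambda>p. B (max 0 (snd p)) (fst p)) \<in> borel_measurable (M \<Otimes>\<^sub>M (lborel :: real measure))"
proof (rule borel_measurable_LIMSEQ_metric)
  fix k :: nat
  let ?c = "real (Suc k)"
  show "(\<lambda>p. B (real_of_int \<lceil>?c * max 0 (snd p)\<rceil> / ?c) (fst p)) \<in> borel_measurable (M \<Otimes>\<^sub>M lborel)"
  proof (rule measurable_compose_countable[where f="\<lambda>j p. B (real_of_int j / ?c) (fst p)"])
    show "\<And>j::int. (\<lambda>p. B (real_of_int j / ?c) (fst p)) \<in> borel_measurable (M \<Otimes>\<^sub>M lborel)"
      using Bm by (intro measurable_compose[OF measurable_fst]) auto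
    show "(\<lambda>p. \<lceil>?c * max 0 (snd p)\<rceil>) \<in> measurable (M \<Otimes>\<^sub>M lborel) (count_space UNIV)"
      by (rule measurable_compose[OF _ measurable_real_ceiling]) simp
  qed
next
  fix p :: "'a \<times> real" assume p: "p \<in> space (M \<Otimes>\<^sub>M lborel)"
  let ?x = "max 0 (snd p)"
  have x0: "0 \<le> ?x" by simp
  have grid_tendsto: "(\<lambda>k. real_of_int \<lceil>real (Suc k) * ?x\<rceil> / real (Suc k)) \<longlonglongrightarrow> ?x"
  proof (rule tendsto_sandwich[of "\<lambda>k. ?x" _ _ "\<lambda>k. ?x + 1 / real (Suc k)"])
    show "\<forall>\<^sub>F k in sequentially. ?x \<le> real_of_int \<lceil>real (Suc k) * ?x\<rceil> / real (Suc k)"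
      by (intro always_eventually allI ceiling_mult_divide_bounds(1)) simp
    show "\<forall>\<^sub>F k in sequentially. real_of_int \<lceil>real (Suc k) * ?x\<rceil> / real (Suc k) \<le> ?x + 1 / real (Suc k)"
      by (intro always_eventually allI ceiling_mult_divide_bounds(2)) simp
    show "(\<lambda>k. ?x) \<longlonglongrightarrow> ?x" by simp
    show "(\<lambda>k. ?x + 1 / real (Suc k)) \<longlonglongrightarrow> ?x"
      using tendsto_add[OF tendsto_const[of ?x] LIMSEQ_inverse_real_of_nat] by (simp add: inverse_eq_divide)
  qed
  have grid_nonneg: "\<forall>\<^sub>F k in sequentially. real_of_int \<lceil>real (Suc k) * ?x\<rceil> / real (Suc k) \<in> {0..}"
  proof (intro always_eventually allI)
    fix k
    have "?x \<le> real_of_int \<lceil>real (Suc k) * ?x\<rceil> / real (Suc k)" by (rule ceiling_mult_divide_bounds(1)) simp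
    then show "real_of_int \<lceil>real (Suc k) * ?x\<rceil> / real (Suc k) \<in> {0..}"
      using x0 unfolding atLeast_iff by linarith
  qed
  from p have "fst p \<in> space M" by (auto simp: space_pair_measure)
  from continuous_on_tendsto_compose[OF cont[OF this] grid_tendsto _ grid_nonneg]
  show "(\<lambda>k. B (real_of_int \<lceil>real (Suc k) * max 0 (snd p)\<rceil> / real (Suc k)) (fst p)) \<longlonglongrightarrow> B (max 0 (snd p)) (fst p)"
    by simp
qed

lemma nn_integral_normal_sq:
  assumes D: "distributed M lborel X (\<lambda>x. ennreal (normal_density 0 \<sigma> x))" and \<sigma>: "0 < \<sigma>"
  shows "(\<integral>\<^sup>+\<omega>. ennreal ((X \<omega>)\<^sup>2) \<partial>M) = ennreal (\<sigma>\<^sup>2)"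
proof -
  have "(\<integral>\<^sup>+\<omega>. ennreal ((X \<omega>)\<^sup>2) \<partial>M) = (\<integral>\<^sup>+x. ennreal (normal_density 0 \<sigma> x) * ennreal (x\<^sup>2) \<partial>lborel)"
    using distributed_nn_integral[OF D, of "\<lambda>x. ennreal (x\<^sup>2)"] by simp
  also have "\<dots> = (\<integral>\<^sup>+x. ennreal (normal_density 0 \<sigma> x * (x - 0)^(2*1)) \<partial>lborel)"
    by (intro nn_integral_cong) (simp add: ennreal_mult)
  also have "\<dots> = ennreal (integral\<^sup>L lborel (\<lambda>x. normal_density 0 \<sigma> x * (x - 0)^(2*1)))"
    using \<sigma> by (intro nn_integral_eq_integral[OF integrable_normal_moment]) auto
  also have "integral\<^sup>L lborel (\<lambda>x. normal_density 0 \<sigma> x * (x - 0)^(2*1)) = \<sigma>\<^sup>2"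
  proof -
    have f2: "fact 2 = (2::real)" by (simp add: numeral_2_eq_2)
    have "integral\<^sup>L lborel (\<lambda>x. normal_density 0 \<sigma> x * (x - 0)^(2*1)) = fact (2*1) / ((2 / \<sigma>\<^sup>2) ^ 1 * fact 1)"
      by (rule integral_normal_moment_even) (rule \<sigma>)
    also have "\<dots> = 2 / (2 / \<sigma>\<^sup>2)" using f2 by simp
    also have "\<dots> = \<sigma>\<^sup>2" using \<sigma> by simp
    finally show ?thesis .
  qed
  finally show ?thesis .
qed

lemma power2_inner_le_sum_components:
  fixes z v :: "real^'d"
  shows "(z \<bullet> v)\<^sup>2 \<le> (norm z)\<^sup>2 * (\<Sum>k\<in>UNIV. (v $ k)\<^sup>2)"
proof -
  have "(z \<bullet> v)\<^sup>2 \<le> (norm z * norm v)\<^sup>2"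
    using Cauchy_Schwarz_ineq2[of z v] by (metis abs_ge_zero power2_abs power_mono)
  also have "\<dots> = (norm z)\<^sup>2 * (norm v)\<^sup>2"
    by (rule power_mult_distrib)
  also have "(norm v)\<^sup>2 = (\<Sum>k\<in>UNIV. (v $ k)\<^sup>2)"
    unfolding power2_norm_eq_inner inner_vec_def by (simp add: power2_eq_square)
  finally show ?thesis .
qed

lemma brownian_motion_inner_increment_sq_le:
  fixes B :: "real \<Rightarrow> 'a \<Rightarrow> real^'d" and z :: "real^'d"
  assumes BM: "brownian_motion M B" and t: "0 \<le> t" "t \<le> s"
  shows "(\<integral>\<^sup>+\<omega>. ennreal ((z \<bullet> (B s \<omega> - B t \<omega>))\<^sup>2) \<partial>M) \<le> ennreal ((norm z)\<^sup>2 * real CARD('d) * (s - t))"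
proof (cases "s = t")
  case False
  then have ts: "t < s" using t by simp
  have dist: "\<And>k. distributed M lborel (\<lambda>\<omega>. (B s \<omega> - B t \<omega>) $ k) (\<lambda>x. ennreal (normal_density 0 (sqrt (s - t)) x))"
    using BM t ts unfolding brownian_motion_def by blast
  have [measurable]: "\<And>k. (\<lambda>\<omega>. (B s \<omega> - B t \<omega>) $ k) \<in> borel_measurable M"
    using distributed_measurable[OF dist] by simp
  have "(\<integral>\<^sup>+\<omega>. ennreal ((z \<bullet> (B s \<omega> - B t \<omega>))\<^sup>2) \<partial>M)
      \<le> (\<integral>\<^sup>+\<omega>. ennreal ((norm z)\<^sup>2) * (\<Sum>k\<in>UNIV. ennreal (((B s \<omega> - B t \<omega>) $ k)\<^sup>2)) \<partial>M)"
  proof (intro nn_integral_mono)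
    fix \<omega>
    have "(z \<bullet> (B s \<omega> - B t \<omega>))\<^sup>2 \<le> (norm z)\<^sup>2 * (\<Sum>k\<in>UNIV. ((B s \<omega> - B t \<omega>) $ k)\<^sup>2)"
      by (rule power2_inner_le_sum_components)
    then show "ennreal ((z \<bullet> (B s \<omega> - B t \<omega>))\<^sup>2)
        \<le> ennreal ((norm z)\<^sup>2) * (\<Sum>k\<in>UNIV. ennreal (((B s \<omega> - B t \<omega>) $ k)\<^sup>2))"
      by (simp add: ennreal_mult[symmetric] sum_nonneg ennreal_leI)
  qed
  also have "\<dots> = ennreal ((norm z)\<^sup>2) * (\<integral>\<^sup>+\<omega>. (\<Sum>k\<in>UNIV. ennreal (((B s \<omega> - B t \<omega>) $ k)\<^sup>2)) \<partial>M)"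
    by (rule nn_integral_cmult) measurable
  also have "(\<integral>\<^sup>+\<omega>. (\<Sum>k\<in>UNIV. ennreal (((B s \<omega> - B t \<omega>) $ k)\<^sup>2)) \<partial>M)
      = (\<Sum>k\<in>UNIV. \<integral>\<^sup>+\<omega>. ennreal (((B s \<omega> - B t \<omega>) $ k)\<^sup>2) \<partial>M)"
    by (rule nn_integral_sum) measurable
  also have "ennreal ((norm z)\<^sup>2) * (\<Sum>k\<in>UNIV. \<integral>\<^sup>+\<omega>. ennreal (((B s \<omega> - B t \<omega>) $ k)\<^sup>2) \<partial>M)
      = ennreal ((norm z)\<^sup>2) * (\<Sum>k\<in>(UNIV::'d set). ennreal (s - t))"
    using nn_integral_normal_sq[OF dist] ts by simp
  also have "\<dots> = ennreal ((norm z)\<^sup>2 * real CARD('d) * (s - t))"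
    using ts by (simp add: ennreal_mult ennreal_of_nat_eq_real_of_nat mult.assoc)
  finally show ?thesis .
qed simp

lemma L2F_measurable:
  fixes \<phi> :: "'a \<Rightarrow> real \<Rightarrow> real" and B :: "real \<Rightarrow> 'a \<Rightarrow> real^'d"
  assumes Bm: "\<And>t. B t \<in> borel_measurable M" and T: "0 \<le> T" and \<phi>: "L2F M B T \<phi>"
  shows L2F_path_measurable: "\<omega> \<in> space M \<Longrightarrow> (\<lambda>t. \<phi> \<omega> t * indicator {0..T} t) \<in> borel_measurable lborel"
    and L2F_energy_measurable: "(\<lambda>\<omega>. \<integral>\<^sup>+t\<in>{0..T}. ennreal ((\<phi> \<omega> t)\<^sup>2) \<partial>lborel) \<in> borel_measurable M"
proof -
  have joint: "(\<lambda>(\<omega>, t). \<phi> \<omega> t * indicator {0..T} t) \<in> borel_measurable (M \<Otimes>\<^sub>M lborel)"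
    using \<phi> borel_measurable_predictable_process[where B = B, OF Bm T] unfolding L2F_def by blast
  then show "\<omega> \<in> space M \<Longrightarrow> (\<lambda>t. \<phi> \<omega> t * indicator {0..T} t) \<in> borel_measurable lborel"
    by (drule measurable_Pair2) simp
  have "(\<lambda>\<omega>. \<integral>\<^sup>+t. ennreal ((\<phi> \<omega> t * indicator {0..T} t)\<^sup>2) \<partial>lborel) \<in> borel_measurable M"
    using joint by (intro lborel.borel_measurable_nn_integral) (simp add: split_beta')
  then show "(\<lambda>\<omega>. \<integral>\<^sup>+t\<in>{0..T}. ennreal ((\<phi> \<omega> t)\<^sup>2) \<partial>lborel) \<in> borel_measurable M"
    by (rule measurable_cong[THEN iffD1, rotated]) (auto intro!: nn_integral_cong split: split_indicator)
qed

lemma borel_measurable_increment_sq: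
  fixes B :: "real \<Rightarrow> 'a \<Rightarrow> real^'d" and z :: "real^'d"
  assumes Bm: "\<And>t. B t \<in> borel_measurable M"
    and cont: "\<And>\<omega>. \<omega> \<in> space M \<Longrightarrow> continuous_on {0..} (\<lambda>t. B t \<omega>)"
    and [measurable]: "A \<in> sets borel"
  shows "(\<lambda>(\<omega>, s). ennreal ((z \<bullet> B (max 0 s) \<omega> - z \<bullet> B t \<omega>)\<^sup>2) * indicator A s) \<in> borel_measurable (M \<Otimes>\<^sub>M lborel)"
proof -
  have [measurable]: "(\<lambda>p. B (max 0 (snd p)) (fst p)) \<in> borel_measurable (M \<Otimes>\<^sub>M lborel)"
    by (rule borel_measurable_continuous_process[OF Bm cont])
  have [measurable]: "(\<lambda>p. B t (fst p)) \<in> borel_measurable (M \<Otimes>\<^sub>M lborel)"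
    by (rule measurable_compose[OF measurable_fst Bm])
  show ?thesis unfolding split_beta' by measurable
qed

lemma brownian_motion_increment_sq_integral_le:
  fixes B :: "real \<Rightarrow> 'a \<Rightarrow> real^'d" and z :: "real^'d"
  assumes BM: "brownian_motion M B" and t: "0 \<le> t" "t \<le> t'"
  shows "(\<integral>\<^sup>+\<omega>. (\<integral>\<^sup>+ s. ennreal ((z \<bullet> B (max 0 s) \<omega> - z \<bullet> B t \<omega>)\<^sup>2) * indicator {t..<t'} s \<partial>lborel) \<partial>M)
    \<le> ennreal ((norm z)\<^sup>2 * real CARD('d) * (t' - t)\<^sup>2)"
proof -
  define c where "c = (norm z)\<^sup>2 * real CARD('d)"
  have c: "0 \<le> c" by (simp add: c_def)
  have Bm: "\<And>t. B t \<in> borel_measurable M" and cont: "\<And>\<omega>. \<omega> \<in> space M \<Longrightarrow> continuous_on {0..} (\<lambda>t. B t \<omega>)"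
    using BM unfolding brownian_motion_def by auto
  interpret M: prob_space M using BM unfolding brownian_motion_def by auto
  interpret pair_sigma_finite M lborel ..
  have "(\<integral>\<^sup>+\<omega>. (\<integral>\<^sup>+ s. ennreal ((z \<bullet> B (max 0 s) \<omega> - z \<bullet> B t \<omega>)\<^sup>2) * indicator {t..<t'} s \<partial>lborel) \<partial>M)
      = (\<integral>\<^sup>+ s. (\<integral>\<^sup>+\<omega>. ennreal ((z \<bullet> B (max 0 s) \<omega> - z \<bullet> B t \<omega>)\<^sup>2) * indicator {t..<t'} s \<partial>M) \<partial>lborel)"
    by (intro Fubini'[symmetric] borel_measurable_increment_sq[OF Bm cont]) measurable
  also have "\<dots> \<le> (\<integral>\<^sup>+ s. ennreal (c * (t' - t)) * indicator {t..<t'} s \<partial>lborel)"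
  proof (intro nn_integral_mono)
    fix s
    show "(\<integral>\<^sup>+\<omega>. ennreal ((z \<bullet> B (max 0 s) \<omega> - z \<bullet> B t \<omega>)\<^sup>2) * indicator {t..<t'} s \<partial>M)
        \<le> ennreal (c * (t' - t)) * indicator {t..<t'} s"
    proof (cases "s \<in> {t..<t'}")
      case True
      then have "(\<integral>\<^sup>+\<omega>. ennreal ((z \<bullet> (B s \<omega> - B t \<omega>))\<^sup>2) \<partial>M) \<le> ennreal (c * (s - t))"
        unfolding c_def using t by (intro brownian_motion_inner_increment_sq_le[OF BM]) auto
      also have "\<dots> \<le> ennreal (c * (t' - t))"
        using True c by (intro ennreal_leI mult_left_mono) auto
      finally show ?thesis
        using True t by (simp add: inner_diff_right)
    qed simp
  qed
  also have "\<dots> = ennreal ((norm z)\<^sup>2 * real CARD('d) * (t' - t)\<^sup>2)"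
    using t c by (simp add: nn_integral_cmult_indicator ennreal_mult[symmetric] c_def power2_eq_square mult.assoc)
  finally show ?thesis .
qed

text \<open>Paths are only specified on [0, \<infinity>); the clamp max 0 makes the integrand jointly measurable in
  (\<omega>, s) and is invisible on the dyadic intervals themselves.\<close>

definition dyadic_increment_energy :: "(real \<Rightarrow> 'a \<Rightarrow> real^'d) \<Rightarrow> real^'d \<Rightarrow> real \<Rightarrow> nat \<Rightarrow> 'a \<Rightarrow> ennreal" where
  "dyadic_increment_energy B z T n \<omega> = (\<Sum>i<2 ^ n. \<integral>\<^sup>+ s. ennreal ((z \<bullet> B (max 0 s) \<omega> - z \<bullet> B (dyadic T n i) \<omega>)\<^sup>2)
      * indicator {dyadic T n i..<dyadic T n (Suc i)} s \<partial>lborel)"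

lemma borel_measurable_dyadic_increment_energy:
  fixes B :: "real \<Rightarrow> 'a \<Rightarrow> real^'d"
  assumes Bm: "\<And>t. B t \<in> borel_measurable M"
    and cont: "\<And>\<omega>. \<omega> \<in> space M \<Longrightarrow> continuous_on {0..} (\<lambda>t. B t \<omega>)"
  shows "dyadic_increment_energy B z T n \<in> borel_measurable M"
  unfolding dyadic_increment_energy_def[abs_def]
  by (intro borel_measurable_sum lborel.borel_measurable_nn_integral borel_measurable_increment_sq[OF Bm cont])
     measurable

lemma nn_integral_dyadic_increment_energy_le:
  fixes B :: "real \<Rightarrow> 'a \<Rightarrow> real^'d" and z :: "real^'d"
  assumes BM: "brownian_motion M B" and T: "0 < T"
  shows "(\<integral>\<^sup>+\<omega>. dyadic_increment_energy B z T n \<omega> \<partial>M) \<le> ennreal ((norm z)\<^sup>2 * real CARD('d) * T\<^sup>2 / 2 ^ n)"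
proof -
  define c where "c = (norm z)\<^sup>2 * real CARD('d)"
  have Bm: "\<And>t. B t \<in> borel_measurable M" and cont: "\<And>\<omega>. \<omega> \<in> space M \<Longrightarrow> continuous_on {0..} (\<lambda>t. B t \<omega>)"
    using BM unfolding brownian_motion_def by auto
  have "(\<integral>\<^sup>+\<omega>. dyadic_increment_energy B z T n \<omega> \<partial>M)
      = (\<Sum>i<2 ^ n. \<integral>\<^sup>+\<omega>. (\<integral>\<^sup>+ s. ennreal ((z \<bullet> B (max 0 s) \<omega> - z \<bullet> B (dyadic T n i) \<omega>)\<^sup>2)
          * indicator {dyadic T n i..<dyadic T n (Suc i)} s \<partial>lborel) \<partial>M)"
    unfolding dyadic_increment_energy_def
    by (intro nn_integral_sum lborel.borel_measurable_nn_integral borel_measurable_increment_sq[OF Bm cont]) measurable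
  also have "\<dots> \<le> (\<Sum>i<(2::nat) ^ n. ennreal (c * (T / 2 ^ n)\<^sup>2))"
    using T unfolding c_def
    by (intro sum_mono order.trans[OF brownian_motion_increment_sq_integral_le[OF BM]])
       (simp_all add: dyadic_nonneg dyadic_Suc)
  also have "\<dots> = ennreal (2 ^ n * (c * (T / 2 ^ n)\<^sup>2))"
    by (simp add: c_def ennreal_mult ennreal_of_nat_eq_real_of_nat)
  also have "2 ^ n * (c * (T / 2 ^ n)\<^sup>2) = c * T\<^sup>2 / 2 ^ n"
    by (simp add: power2_eq_square)
  finally show ?thesis by (simp add: c_def)
qed


locale frozen_driver_setting =
  fixes M :: "'a measure" and B :: "real \<Rightarrow> 'a \<Rightarrow> real^'d" and T \<mu> :: real
    and f :: "'a \<Rightarrow> real \<Rightarrow> real \<Rightarrow> real^'d \<Rightarrow> real"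
    and Y :: "real \<Rightarrow> real \<Rightarrow> real^'d \<Rightarrow> 'a \<Rightarrow> real \<Rightarrow> real"
  assumes BM: "brownian_motion M B" and T: "0 < T"
    and f_L2: "\<And>y z. L2F M B T (\<lambda>\<omega> t. f \<omega> t y z)"
    and f_lip: "\<And>\<omega> t y y' z z'. \<omega> \<in> space M \<Longrightarrow> t \<in> {0..T} \<Longrightarrow>
      \<bar>f \<omega> t y z - f \<omega> t y' z'\<bar> \<le> \<mu> * (\<bar>y - y'\<bar> + norm (z - z'))"
    and Y_meas: "\<And>t y z. t \<in> {0..T} \<Longrightarrow>
      (\<lambda>(\<omega>, s). Y t y z \<omega> s) \<in> borel_measurable (M \<Otimes>\<^sub>M restrict_space lborel {t..T})"
    and Y_sol: "\<And>t y z. t \<in> {0..T} \<Longrightarrow> AE \<omega> in M. \<forall>s\<in>{t..T}.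
      set_integrable lborel {t..s} (\<lambda>r. f \<omega> r (Y t y z \<omega> r) z) \<and>
      Y t y z \<omega> s = y - (LINT r:{t..s}|lborel. f \<omega> r (Y t y z \<omega> r) z) + z \<bullet> (B s \<omega> - B t \<omega>)"
begin

definition frozen_driver :: "nat \<Rightarrow> 'a \<Rightarrow> real \<Rightarrow> real \<Rightarrow> real^'d \<Rightarrow> real" where
  "frozen_driver n \<omega> s y z = (\<Sum>i<2 ^ n. f \<omega> s (Y (dyadic T n i) y z \<omega> s) z
     * indicator {dyadic T n i..<dyadic T n (Suc i)} s)"

lemma B_measurable: "B t \<in> borel_measurable M"
  and B_continuous: "\<omega> \<in> space M \<Longrightarrow> continuous_on {0..} (\<lambda>t. B t \<omega>)"
  using BM unfolding brownian_motion_def by auto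

sublocale prob_space M
  using BM unfolding brownian_motion_def by auto

lemma AE_solution_from_dyadic_points:
  fixes y :: real and z :: "real^'d"
  shows "AE \<omega> in M. \<forall>n i s. i < 2 ^ n \<longrightarrow> s \<in> {dyadic T n i..T} \<longrightarrow>
      set_integrable lborel {dyadic T n i..s} (\<lambda>r. f \<omega> r (Y (dyadic T n i) y z \<omega> r) z) \<and>
      Y (dyadic T n i) y z \<omega> s = y - (LINT r:{dyadic T n i..s}|lborel. f \<omega> r (Y (dyadic T n i) y z \<omega> r) z)
        + z \<bullet> (B s \<omega> - B (dyadic T n i) \<omega>)"
  unfolding AE_all_countable
proof (intro allI)
  fix n i :: nat
  show "AE \<omega> in M. \<forall>s. i < 2 ^ n \<longrightarrow> s \<in> {dyadic T n i..T} \<longrightarrow>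
      set_integrable lborel {dyadic T n i..s} (\<lambda>r. f \<omega> r (Y (dyadic T n i) y z \<omega> r) z) \<and>
      Y (dyadic T n i) y z \<omega> s = y - (LINT r:{dyadic T n i..s}|lborel. f \<omega> r (Y (dyadic T n i) y z \<omega> r) z)
        + z \<bullet> (B s \<omega> - B (dyadic T n i) \<omega>)"
  proof (cases "i < 2 ^ n")
    case True
    then have "dyadic T n i \<in> {0..T}" using T by (simp add: dyadic_nonneg dyadic_le)
    from Y_sol[OF this, of y z] show ?thesis by (rule AE_mp) (intro AE_I2, blast)
  qed simp
qed

lemma AE_frozen_driver_error_le:
  fixes y :: real and z :: "real^'d"
  shows "AE \<omega> in M. \<forall>n. 3 * \<mu>\<^sup>2 * (T / 2 ^ n)\<^sup>2 \<le> 1/2 \<longrightarrow>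
      (\<integral>\<^sup>+s\<in>{0..T}. ennreal ((frozen_driver n \<omega> s y z - f \<omega> s y z)\<^sup>2) \<partial>lborel)
        \<le> ennreal (6 * \<mu>\<^sup>2 * (T / 2 ^ n)\<^sup>2) * (\<integral>\<^sup>+s\<in>{0..T}. ennreal ((f \<omega> s y z)\<^sup>2) \<partial>lborel)
          + ennreal (6 * \<mu>\<^sup>2) * dyadic_increment_energy B z T n \<omega>"
  using AE_solution_from_dyadic_points[where y = y and z = z] AE_space
proof eventually_elim
  case (elim \<omega>)
  note sol = elim(1) and \<omega> = elim(2)
  have "(\<lambda>s. B (max 0 s) \<omega>) \<in> borel_measurable lborel"
    using measurable_Pair2[OF borel_measurable_continuous_process[OF B_measurable B_continuous] \<omega>] by simp
  then have B_path: "(\<lambda>s. z \<bullet> B (max 0 s) \<omega>) \<in> borel_measurable lborel"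
    by measurable
  have "continuous_on {0..T} (\<lambda>s. z \<bullet> B s \<omega>)"
    by (intro continuous_intros continuous_on_subset[OF B_continuous[OF \<omega>]]) auto
  then have B_cont: "continuous_on {0..T} (\<lambda>s. z \<bullet> B (max 0 s) \<omega>)"
    by (rule continuous_on_cong[THEN iffD1, rotated 2]) auto
  show ?case
  proof (intro allI impI)
    fix n assume small: "3 * \<mu>\<^sup>2 * (T / 2 ^ n)\<^sup>2 \<le> 1/2"
    have "(\<integral>\<^sup>+s\<in>{0..T}. ennreal ((frozen_driver n \<omega> s y z - f \<omega> s y z)\<^sup>2) \<partial>lborel)
        \<le> ennreal (6 * \<mu>\<^sup>2 * (T / 2 ^ n)\<^sup>2) * (\<integral>\<^sup>+s\<in>{0..T}. ennreal ((f \<omega> s y z)\<^sup>2) \<partial>lborel)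
          + ennreal (6 * \<mu>\<^sup>2) * (\<Sum>i<2 ^ n. \<integral>\<^sup>+ s.
            ennreal ((z \<bullet> B (max 0 s) \<omega> - z \<bullet> B (max 0 (dyadic T n i)) \<omega>)\<^sup>2)
            * indicator {dyadic T n i..<dyadic T n (Suc i)} s \<partial>lborel)"
      unfolding frozen_driver_def
    proof (rule nn_integral_sq_dyadic_freezing_error[where X = "\<lambda>t. Y t y z \<omega>", OF T small
        _ L2F_path_measurable[OF B_measurable _ f_L2 \<omega>] B_path B_cont])
      show "\<bar>f \<omega> r x z - f \<omega> r x' z\<bar> \<le> \<mu> * \<bar>x - x'\<bar>" if "r \<in> {0..T}" for r x x'
        using f_lip[OF \<omega> that, of x z x' z] by simp
      show "Y (dyadic T n i) y z \<omega> \<in> borel_measurable (restrict_space lborel {dyadic T n i..T})"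
        if "i < 2 ^ n" for i
        using measurable_Pair2[OF Y_meas \<omega>] that T by (simp add: dyadic_nonneg dyadic_le)
      fix i s assume "i < 2 ^ n" "s \<in> {dyadic T n i..T}"
      then show "set_integrable lborel {dyadic T n i..s} (\<lambda>r. f \<omega> r (Y (dyadic T n i) y z \<omega> r) z)"
        and "Y (dyadic T n i) y z \<omega> s = y - (LINT r:{dyadic T n i..s}|lborel. f \<omega> r (Y (dyadic T n i) y z \<omega> r) z)
          + (z \<bullet> B (max 0 s) \<omega> - z \<bullet> B (max 0 (dyadic T n i)) \<omega>)"
        using sol T dyadic_nonneg[of T n i] by (auto simp: inner_diff_right)
    qed (use T in simp)
    then show "(\<integral>\<^sup>+s\<in>{0..T}. ennreal ((frozen_driver n \<omega> s y z - f \<omega> s y z)\<^sup>2) \<partial>lborel)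
        \<le> ennreal (6 * \<mu>\<^sup>2 * (T / 2 ^ n)\<^sup>2) * (\<integral>\<^sup>+s\<in>{0..T}. ennreal ((f \<omega> s y z)\<^sup>2) \<partial>lborel)
          + ennreal (6 * \<mu>\<^sup>2) * dyadic_increment_energy B z T n \<omega>"
      using T by (simp add: dyadic_increment_energy_def dyadic_nonneg)
  qed
qed

lemma nn_integral_frozen_driver_error_le:
  fixes y :: real and z :: "real^'d"
  assumes small: "3 * \<mu>\<^sup>2 * (T / 2 ^ n)\<^sup>2 \<le> 1/2"
  shows "(\<integral>\<^sup>+\<omega>. (\<integral>\<^sup>+s\<in>{0..T}. ennreal ((frozen_driver n \<omega> s y z - f \<omega> s y z)\<^sup>2) \<partial>lborel) \<partial>M)
    \<le> ennreal (6 * \<mu>\<^sup>2 * (T / 2 ^ n)\<^sup>2) * (\<integral>\<^sup>+\<omega>. (\<integral>\<^sup>+s\<in>{0..T}. ennreal ((f \<omega> s y z)\<^sup>2) \<partial>lborel) \<partial>M)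
      + ennreal (6 * \<mu>\<^sup>2 * (norm z)\<^sup>2 * real CARD('d) * T\<^sup>2 / 2 ^ n)"
proof -
  have "(\<integral>\<^sup>+\<omega>. (\<integral>\<^sup>+s\<in>{0..T}. ennreal ((frozen_driver n \<omega> s y z - f \<omega> s y z)\<^sup>2) \<partial>lborel) \<partial>M)
      \<le> (\<integral>\<^sup>+\<omega>. ennreal (6 * \<mu>\<^sup>2 * (T / 2 ^ n)\<^sup>2) * (\<integral>\<^sup>+s\<in>{0..T}. ennreal ((f \<omega> s y z)\<^sup>2) \<partial>lborel)
          + ennreal (6 * \<mu>\<^sup>2) * dyadic_increment_energy B z T n \<omega> \<partial>M)"
    using AE_frozen_driver_error_le[where y = y and z = z]
    by (intro nn_integral_mono_AE, eventually_elim) (use small in blast)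
  also have "\<dots> = ennreal (6 * \<mu>\<^sup>2 * (T / 2 ^ n)\<^sup>2) * (\<integral>\<^sup>+\<omega>. (\<integral>\<^sup>+s\<in>{0..T}. ennreal ((f \<omega> s y z)\<^sup>2) \<partial>lborel) \<partial>M)
      + ennreal (6 * \<mu>\<^sup>2) * (\<integral>\<^sup>+\<omega>. dyadic_increment_energy B z T n \<omega> \<partial>M)"
    using L2F_energy_measurable[OF B_measurable _ f_L2] T
      borel_measurable_dyadic_increment_energy[OF B_measurable B_continuous]
    by (simp add: nn_integral_add nn_integral_cmult)
  also have "\<dots> \<le> ennreal (6 * \<mu>\<^sup>2 * (T / 2 ^ n)\<^sup>2) * (\<integral>\<^sup>+\<omega>. (\<integral>\<^sup>+s\<in>{0..T}. ennreal ((f \<omega> s y z)\<^sup>2) \<partial>lborel) \<partial>M)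
      + ennreal (6 * \<mu>\<^sup>2) * ennreal ((norm z)\<^sup>2 * real CARD('d) * T\<^sup>2 / 2 ^ n)"
    using nn_integral_dyadic_increment_energy_le[OF BM T] by (intro add_mono mult_left_mono) auto
  finally show ?thesis
    by (simp add: ennreal_mult[symmetric] mult.assoc)
qed

theorem frozen_driver_tendsto:
  fixes y :: real and z :: "real^'d"
  shows "(\<lambda>n. \<integral>\<^sup>+\<omega>. (\<integral>\<^sup>+s\<in>{0..T}. ennreal ((frozen_driver n \<omega> s y z - f \<omega> s y z)\<^sup>2) \<partial>lborel) \<partial>M) \<longlonglongrightarrow> 0"
proof -
  obtain C where C: "(\<integral>\<^sup>+\<omega>. (\<integral>\<^sup>+s\<in>{0..T}. ennreal ((f \<omega> s y z)\<^sup>2) \<partial>lborel) \<partial>M) = ennreal C" "0 \<le> C"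
    using f_L2[of y z] by (auto simp: L2F_def less_top_ennreal)
  define h where "h n = T / 2 ^ n" for n :: nat
  define b where "b n = 6 * \<mu>\<^sup>2 * (h n)\<^sup>2 * C + 6 * \<mu>\<^sup>2 * (norm z)\<^sup>2 * real CARD('d) * T * h n" for n
  have h: "h \<longlonglongrightarrow> 0"
    unfolding h_def by (intro LIMSEQ_divide_realpow_zero) simp
  then have "b \<longlonglongrightarrow> 6 * \<mu>\<^sup>2 * 0\<^sup>2 * C + 6 * \<mu>\<^sup>2 * (norm z)\<^sup>2 * real CARD('d) * T * 0"
    unfolding b_def by (intro tendsto_intros)
  then have "(\<lambda>n. ennreal (b n)) \<longlonglongrightarrow> ennreal 0"
    by (intro tendsto_ennrealI) simp
  then have b: "(\<lambda>n. ennreal (b n)) \<longlonglongrightarrow> 0"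
    by simp
  have "eventually (\<lambda>n. 3 * \<mu>\<^sup>2 * (h n)\<^sup>2 < 1/2) sequentially"
    using h by (intro order_tendstoD(2)) (auto intro!: tendsto_eq_intros)
  then have le: "eventually (\<lambda>n. (\<integral>\<^sup>+\<omega>. (\<integral>\<^sup>+s\<in>{0..T}. ennreal ((frozen_driver n \<omega> s y z - f \<omega> s y z)\<^sup>2) \<partial>lborel) \<partial>M)
      \<le> ennreal (b n)) sequentially"
  proof eventually_elim
    case (elim n)
    have "b n = 6 * \<mu>\<^sup>2 * (h n)\<^sup>2 * C + 6 * \<mu>\<^sup>2 * (norm z)\<^sup>2 * real CARD('d) * T\<^sup>2 / 2 ^ n"
      by (simp add: b_def h_def power2_eq_square)
    then have "ennreal (b n) = ennreal (6 * \<mu>\<^sup>2 * (h n)\<^sup>2) * ennreal C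
        + ennreal (6 * \<mu>\<^sup>2 * (norm z)\<^sup>2 * real CARD('d) * T\<^sup>2 / 2 ^ n)"
      using C(2) T by (simp add: ennreal_mult')
    with nn_integral_frozen_driver_error_le[of n y z] elim show ?case
      by (simp add: C(1) h_def)
  qed
  show ?thesis
    by (rule tendsto_sandwich[OF _ le tendsto_const b]) simp
qed

end

theorem lemma5p2:
  fixes M :: "'a measure" and B :: "real \<Rightarrow> 'a \<Rightarrow> real^'d" and T \<mu> :: real
    and f :: "'a \<Rightarrow> real \<Rightarrow> real \<Rightarrow> real^'d \<Rightarrow> real"
    and Y :: "real \<Rightarrow> real \<Rightarrow> real^'d \<Rightarrow> 'a \<Rightarrow> real \<Rightarrow> real"
  assumes BM: "brownian_motion M B"
    and T: "T > 0"
    and f_L2: "\<And>y z. L2F M B T (\<lambda>\<omega> t. f \<omega> t y z)"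
    and f_lip: "\<And>\<omega> t y y' z z'. \<omega> \<in> space M \<Longrightarrow> t \<in> {0..T} \<Longrightarrow>
                  \<bar>f \<omega> t y z - f \<omega> t y' z'\<bar> \<le> \<mu> * (\<bar>y - y'\<bar> + norm (z - z'))"
    and Y_meas: "\<And>t y z. t \<in> {0..T} \<Longrightarrow>
                  (\<lambda>(\<omega>, s). Y t y z \<omega> s) \<in> borel_measurable (M \<Otimes>\<^sub>M restrict_space lborel {t..T})"
    and Y_sol: "\<And>t y z. t \<in> {0..T} \<Longrightarrow>
                  AE \<omega> in M. \<forall>s\<in>{t..T}.
                    set_integrable lborel {t..s} (\<lambda>r. f \<omega> r (Y t y z \<omega> r) z) \<and>
                    Y t y z \<omega> s = y - set_lebesgue_integral lborel {t..s} (\<lambda>r. f \<omega> r (Y t y z \<omega> r) z)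
                                    + z \<bullet> (B s \<omega> - B t \<omega>)"
  defines "fn \<equiv> \<lambda>n \<omega> s y z. \<Sum>i<2^n. f \<omega> s (Y (dyadic T n i) y z \<omega> s) z
                                    * indicator {dyadic T n i..<dyadic T n (Suc i)} s"
  shows "(\<lambda>n. \<integral>\<^sup>+\<omega>. (\<integral>\<^sup>+s\<in>{0..T}. ennreal ((fn n \<omega> s y z - f \<omega> s y z)\<^sup>2) \<partial>lborel) \<partial>M)
           \<longlonglongrightarrow> 0"
proof -
  interpret frozen_driver_setting M B T \<mu> f Y
    by unfold_locales (fact BM T f_L2 f_lip Y_meas Y_sol)+
  have "fn = frozen_driver"
    unfolding fn_def by (intro ext) (simp add: frozen_driver_def)
  with frozen_driver_tendsto show ?thesis by simp
qed

end
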